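(* For every integer $r\ge1$ there is a constant $C_r$ such that for every irreducible type $r$ random walk on a cyclic group $\mathbb{Z}/n\mathbb{Z}$ with transition matrix $A$, \[(1-|\lambda_m|)\,t_A(\tfrac12)\le C_r,\] where $|\lambda_m|=\max_{k\neq 0}|\lambda_k|$ is the largest absolute value of a nontrivial eigenvalue of $A$.
   Context: A type $r$ random walk on $\mathbb{Z}/n\mathbb{Z}$: $n\ge\pi^r$, and from $x$ the walk moves to $x+s$ with $s$ chosen uniformly among the $2r+1$ steps $\pm a_1,\dots,\pm a_r,0$ for some $a_1,\dots,a_r\in\mathbb{Z}/n\mathbb{Z}$. $A$ is its transition matrix with eigenvalues $\lambda_0=1,\lambda_1,\dots,\lambda_{n-1}$. With ${\bf v}_0=\frac1n{\bf 1}$ and ${\bf x}_0=(1,0,\dots,0)$, $d_A(t)=|A^t{\bf x}_0-{\bf v}_0|_1$ and $t_A(d)=\max\{t: d_A(t)\ge d\}$. *)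

theory Defs
  imports Complex_Main
begin

text \<open>Elements of Z/nZ are represented by the naturals 0..<n.  A type r random walk is
given by n and generators a 0, ..., a (r-1) (integers, read modulo n).  The
2r+1 steps are the list 0, a 0, -a 0, ..., a (r-1), -a (r-1), each chosen with
probability 1/(2r+1) (steps counted with multiplicity).
rw_matrix n r a y x is the probability of moving from x to y (column-stochastic,
so that A acts on column distribution vectors; the matrix is symmetric anyway).\<close>

definition rw_matrix :: "nat \<Rightarrow> nat \<Rightarrow> (nat \<Rightarrow> int) \<Rightarrow> nat \<Rightarrow> nat \<Rightarrow> real" where
  "rw_matrix n r a y x =
     (of_bool (int x mod int n = int y)
      + (\<Sum>i<r. of_bool ((int x + a i) mod int n = int y)
               + of_bool ((int x - a i) mod int n = int y)))
     / real (2 * r + 1)"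

fun mat_pow :: "nat \<Rightarrow> (nat \<Rightarrow> nat \<Rightarrow> real) \<Rightarrow> nat \<Rightarrow> nat \<Rightarrow> nat \<Rightarrow> real" where
  "mat_pow n A 0 = (\<lambda>y x. of_bool (y = x))"
| "mat_pow n A (Suc t) = (\<lambda>y x. \<Sum>z<n. A y z * mat_pow n A t z x)"

definition rw_irreducible :: "nat \<Rightarrow> nat \<Rightarrow> (nat \<Rightarrow> int) \<Rightarrow> bool" where
  "rw_irreducible n r a \<longleftrightarrow>
     (\<forall>x<n. \<forall>y<n. \<exists>t. mat_pow n (rw_matrix n r a) t y x > 0)"

definition is_eigenvalue :: "nat \<Rightarrow> (nat \<Rightarrow> nat \<Rightarrow> real) \<Rightarrow> complex \<Rightarrow> bool" where
  "is_eigenvalue n A \<mu> \<longleftrightarrow>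
     (\<exists>v :: nat \<Rightarrow> complex. (\<exists>i<n. v i \<noteq> 0) \<and>
        (\<forall>y<n. (\<Sum>x<n. complex_of_real (A y x) * v x) = \<mu> * v y))"

definition rw_dist :: "nat \<Rightarrow> nat \<Rightarrow> (nat \<Rightarrow> int) \<Rightarrow> nat \<Rightarrow> real" where
  "rw_dist n r a t = (\<Sum>y<n. \<bar>mat_pow n (rw_matrix n r a) t y 0 - 1 / real n\<bar>)"

definition rw_mixing :: "nat \<Rightarrow> nat \<Rightarrow> (nat \<Rightarrow> int) \<Rightarrow> real \<Rightarrow> nat" where
  "rw_mixing n r a d = Max {t. rw_dist n r a t \<ge> d}"

text \<open>For an irreducible walk the eigenvalue 1 is
simple, so the nontrivial eigenvalues are exactly the eigenvalues other than 1
(n \<ge> pi^r > 3 so this set is nonempty).\<close>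
definition rw_lambda_m :: "nat \<Rightarrow> nat \<Rightarrow> (nat \<Rightarrow> int) \<Rightarrow> real" where
  "rw_lambda_m n r a = Max {cmod \<mu> | \<mu>. is_eigenvalue n (rw_matrix n r a) \<mu> \<and> \<mu> \<noteq> 1}"

end

theory Submission
  imports Defs "HOL-Library.FuncSet"
begin

(* The walk is diagonalised by the characters chi n k z = exp(2 pi i k z / n), k < n:
   chi n k is an eigenvector of A with eigenvalue
     rw_eig n r a k = (1 + 2 sum_i cos(2 pi k a_i / n)) / (2r+1),
   these are all the eigenvalues, and by orthogonality of characters
     d_A(t) <= sum_{k=1}^{n-1} |rw_eig n r a k|^t.
   With ||x|| the distance of x to the nearest integer, the "spread"
     s(k) = max_i ||k a_i / n||
   controls the eigenvalues:  s(k)^2/(2r+1) <= 1 - |rw_eig k|  and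
   1 - rw_eig k <= 2 pi^2 s(k)^2.  Irreducibility forces s(k) > 0 for k <> 0; let rho be
   the least spread.  Then 1 - |lambda_m| <= 2 pi^2 rho^2.  A pigeonhole argument on the
   torus shows that at most (2j+2)^r frequencies have spread below (j+1) rho, so once
   t rho^2/(2r+1) >= 3r+3 the sum above is < 1/2; hence t_A(1/2) rho^2 < (3r+3)(2r+1),
   and the product is at most C_r = 2 pi^2 (3r+3)(2r+1).  (The hypothesis n >= pi^r is only
   needed through n >= 2.) *)

section \<open>Characters of the cyclic group\<close>

definition chi :: "nat \<Rightarrow> nat \<Rightarrow> int \<Rightarrow> complex" where
  "chi n k z = cis (2 * pi * real k * of_int z / real n)"

lemma chi_add: "chi n k (z + w) = chi n k z * chi n k w"
  unfolding chi_def by (simp add: cis_mult add_divide_distrib distrib_left)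

lemma chi_multiple: assumes "n > 0" shows "chi n k (int n * q) = 1"
proof -
  have "2 * pi * real k * of_int (int n * q) / real n = 2 * pi * of_int (int k * q)"
    using assms by (simp add: field_simps)
  then show ?thesis unfolding chi_def by (simp add: Ints_of_int)
qed

lemma chi_mod: assumes "n > 0" shows "chi n k (z mod int n) = chi n k z"
proof -
  have "chi n k z = chi n k (z mod int n) * chi n k (int n * (z div int n))"
    by (metis chi_add div_mult_mod_eq add.commute mult.commute)
  with chi_multiple[OF assms] show ?thesis by simp
qed

lemma norm_chi [simp]: "cmod (chi n k z) = 1"
  unfolding chi_def by simp

lemma chi_at_zero [simp]: "chi n k 0 = 1"
  unfolding chi_def by simp

lemma chi_trivial [simp]: "chi n 0 z = 1"
  unfolding chi_def by simp

lemma chi_pair: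
  "chi n k (z - s) + chi n k (z + s) = chi n k z * complex_of_real (2 * cos (2 * pi * real k * of_int s / real n))"
proof -
  have "chi n k (z - s) + chi n k (z + s) = chi n k z * (chi n k (-s) + chi n k s)"
    using chi_add[of n k z "-s"] chi_add[of n k z s] by (simp add: distrib_left)
  moreover have "chi n k (-s) + chi n k s = complex_of_real (2 * cos (2 * pi * real k * of_int s / real n))"
    unfolding chi_def by (simp add: complex_eq_iff)
  ultimately show ?thesis by simp
qed

lemma chi_sum_freq: assumes "n > 0"
  shows "(\<Sum>k<n. chi n k j) = (if int n dvd j then of_nat n else 0)"
proof (cases "int n dvd j")
  case True
  then obtain m where "j = int n * m" by blast
  then show ?thesis using chi_multiple[OF assms] True by simp
next
  case False
  define q where "q = cis (2 * pi * of_int j / real n)"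
  have powers: "chi n k j = q ^ k" for k
    unfolding q_def chi_def DeMoivre by (simp add: field_simps)
  have "q \<noteq> 1"
  proof
    assume "q = 1"
    then have "cos (2 * pi * of_int j / real n) = 1"
      unfolding q_def by (metis cis.sel(1) one_complex.sel(1))
    then obtain m :: int where "2 * pi * of_int j / real n = of_int m * 2 * pi"
      using cos_one_2pi_int by blast
    then have "of_int j = real n * of_int m" using assms by (simp add: field_simps)
    then have "j = int n * m" by (metis of_int_eq_iff of_int_mult of_int_of_nat_eq)
    with False show False by simp
  qed
  moreover have "q ^ n = 1"
  proof -
    have "real n * (2 * pi * of_int j / real n) = 2 * pi * of_int j" using assms by simp
    then show ?thesis
      unfolding q_def DeMoivre using cis_multiple_2pi[of "of_int j"] by (simp add: Ints_of_int)
  qed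
  ultimately show ?thesis using False by (simp add: powers sum_gp_strict)
qed

lemma chi_sum_freq_diff: assumes "n > 0" "y < n" "x < n"
  shows "(\<Sum>k<n. chi n k (int y - int x)) = (if y = x then of_nat n else 0)"
proof -
  have "int n dvd (int y - int x) \<longleftrightarrow> y = x"
  proof
    assume "int n dvd (int y - int x)"
    then have "int y mod int n = int x mod int n" by (simp add: mod_eq_dvd_iff)
    then show "y = x" using assms by simp
  qed simp
  then show ?thesis using chi_sum_freq[OF assms(1)] by simp
qed

section \<open>Fourier diagonalisation of the walk\<close>

lemma shift_hits_iff: assumes "n > 0" "x < n"
  shows "(int x + s) mod int n = int y \<longleftrightarrow> y < n \<and> x = nat ((int y - s) mod int n)"
proof
  assume h: "(int x + s) mod int n = int y"
  then have "y < n" using assms by (metis of_nat_less_iff pos_mod_bound of_nat_0_less_iff)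
  moreover have "(int y - s) mod int n = int x"
    using h assms by (metis add_diff_cancel_right' mod_diff_left_eq mod_pos_pos_trivial of_nat_0_le_iff of_nat_less_iff)
  ultimately show "y < n \<and> x = nat ((int y - s) mod int n)" by simp
next
  assume h: "y < n \<and> x = nat ((int y - s) mod int n)"
  then have "int x = (int y - s) mod int n" using assms by simp
  then have "(int x + s) mod int n = (int y - s + s) mod int n" by (metis mod_add_left_eq)
  then show "(int x + s) mod int n = int y" using h by simp
qed

lemma shift_chi_right: assumes "n > 0" "y < n"
  shows "(\<Sum>x<n. of_bool ((int x + s) mod int n = int y) * chi n k (int x)) = chi n k (int y - s)"
proof -
  have "(\<Sum>x<n. of_bool ((int x + s) mod int n = int y) * chi n k (int x))
      = (\<Sum>x<n. if x = nat ((int y - s) mod int n) then chi n k (int x) else 0)"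
    by (rule sum.cong) (use shift_hits_iff[OF assms(1)] assms(2) in auto)
  also have "\<dots> = chi n k (int (nat ((int y - s) mod int n)))"
    using assms by (simp add: nat_less_iff)
  also have "\<dots> = chi n k (int y - s)" using assms by (simp add: chi_mod)
  finally show ?thesis .
qed

lemma shift_chi_left: assumes "n > 0"
  shows "(\<Sum>y<n. of_bool ((int x + s) mod int n = int y) * chi n k (int y)) = chi n k (int x + s)"
proof -
  have "(\<Sum>y<n. of_bool ((int x + s) mod int n = int y) * chi n k (int y))
      = (\<Sum>y<n. if y = nat ((int x + s) mod int n) then chi n k (int y) else 0)"
    by (rule sum.cong) auto
  also have "\<dots> = chi n k (int (nat ((int x + s) mod int n)))"
    using assms by (simp add: nat_less_iff)
  also have "\<dots> = chi n k (int x + s)" using assms by (simp add: chi_mod)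
  finally show ?thesis .
qed

definition rw_eig :: "nat \<Rightarrow> nat \<Rightarrow> (nat \<Rightarrow> int) \<Rightarrow> nat \<Rightarrow> real" where
  "rw_eig n r a k = (1 + (\<Sum>i<r. 2 * cos (2 * pi * real k * of_int (a i) / real n))) / real (2 * r + 1)"

lemma rw_eig_trivial [simp]: "rw_eig n r a 0 = 1"
  unfolding rw_eig_def by simp

lemma of_real_of_bool: "complex_of_real (of_bool P) = of_bool P"
  by simp

lemma rw_matrix_complex: "complex_of_real (rw_matrix n r a y x) =
   (of_bool (int x mod int n = int y) + (\<Sum>i<r. of_bool ((int x + a i) mod int n = int y)
       + of_bool ((int x - a i) mod int n = int y))) / of_nat (2 * r + 1)"
  unfolding rw_matrix_def of_real_divide of_real_add of_real_sum of_real_of_bool by simp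

lemma sum_of_translations:
  fixes B0 :: "nat \<Rightarrow> complex"
  shows "(\<Sum>x<n. (B0 x + (\<Sum>i<r. B1 i x + B2 i x)) / D * F x)
   = ((\<Sum>x<n. B0 x * F x) + (\<Sum>i<r. (\<Sum>x<n. B1 i x * F x) + (\<Sum>x<n. B2 i x * F x))) / D"
proof -
  have "(\<Sum>x<n. (B0 x + (\<Sum>i<r. B1 i x + B2 i x)) / D * F x)
     = (\<Sum>x<n. B0 x * F x + (\<Sum>i<r. B1 i x * F x + B2 i x * F x)) / D"
    by (simp add: sum_divide_distrib distrib_right sum_distrib_right)
  also have "\<dots> = ((\<Sum>x<n. B0 x * F x) + (\<Sum>x<n. \<Sum>i<r. B1 i x * F x + B2 i x * F x)) / D"
    by (simp only: sum.distrib)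
  also have "\<dots> = ((\<Sum>x<n. B0 x * F x) + (\<Sum>i<r. \<Sum>x<n. B1 i x * F x + B2 i x * F x)) / D"
    by (subst sum.swap) (rule refl)
  finally show ?thesis by (simp only: sum.distrib)
qed

lemma rw_matrix_chi_right: assumes "n > 0" "y < n"
  shows "(\<Sum>x<n. complex_of_real (rw_matrix n r a y x) * chi n k (int x))
       = complex_of_real (rw_eig n r a k) * chi n k (int y)"
proof -
  have minus: "(\<Sum>x<n. of_bool ((int x - s) mod int n = int y) * chi n k (int x)) = chi n k (int y + s)" for s
    using shift_chi_right[OF assms, of "-s" k] by simp
  have "(\<Sum>x<n. complex_of_real (rw_matrix n r a y x) * chi n k (int x))
     = (chi n k (int y) + (\<Sum>i<r. chi n k (int y - a i) + chi n k (int y + a i))) / of_nat (2 * r + 1)"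
    unfolding rw_matrix_complex sum_of_translations minus shift_chi_right[OF assms]
    using shift_chi_right[OF assms, of 0 k] by simp
  also have "\<dots> = complex_of_real (rw_eig n r a k) * chi n k (int y)"
    unfolding chi_pair rw_eig_def by (simp add: sum_distrib_left[symmetric] field_simps)
  finally show ?thesis .
qed

lemma rw_matrix_chi_left: assumes "n > 0"
  shows "(\<Sum>y<n. complex_of_real (rw_matrix n r a y x) * chi n k (int y))
       = complex_of_real (rw_eig n r a k) * chi n k (int x)"
proof -
  have minus: "(\<Sum>y<n. of_bool ((int x - s) mod int n = int y) * chi n k (int y)) = chi n k (int x - s)" for s
    using shift_chi_left[OF assms, of x "-s" k] by simp
  have "(\<Sum>y<n. complex_of_real (rw_matrix n r a y x) * chi n k (int y))
     = (chi n k (int x) + (\<Sum>i<r. chi n k (int x + a i) + chi n k (int x - a i))) / of_nat (2 * r + 1)"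
    unfolding rw_matrix_complex sum_of_translations minus shift_chi_left[OF assms]
    using shift_chi_left[OF assms, of x 0 k] by simp
  also have "\<dots> = complex_of_real (rw_eig n r a k) * chi n k (int x)"
    unfolding add.commute[of "chi n k (int x + _)"] chi_pair rw_eig_def
    by (simp add: sum_distrib_left[symmetric] field_simps)
  finally show ?thesis .
qed

lemma mat_pow_fourier: assumes "n > 0" "y < n"
  shows "complex_of_real (mat_pow n (rw_matrix n r a) t y 0)
     = (\<Sum>k<n. complex_of_real (rw_eig n r a k) ^ t * chi n k (int y)) / of_nat n"
  using assms(2)
proof (induction t arbitrary: y)
  case 0
  then show ?case using chi_sum_freq_diff[OF assms(1) 0, of 0] assms by simp
next
  case (Suc t)
  let ?A = "\<lambda>y z. complex_of_real (rw_matrix n r a y z)"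
  let ?L = "\<lambda>k. complex_of_real (rw_eig n r a k)"
  have "complex_of_real (mat_pow n (rw_matrix n r a) (Suc t) y 0)
     = (\<Sum>z<n. \<Sum>k<n. ?A y z * (?L k ^ t * chi n k (int z))) / of_nat n"
    by (simp add: Suc.IH sum_divide_distrib[symmetric] sum_distrib_left)
  also have "\<dots> = (\<Sum>k<n. ?L k ^ t * (\<Sum>z<n. ?A y z * chi n k (int z))) / of_nat n"
    by (subst sum.swap) (simp only: sum_distrib_left mult.left_commute)
  also have "\<dots> = (\<Sum>k<n. ?L k ^ Suc t * chi n k (int y)) / of_nat n"
    using rw_matrix_chi_right[OF assms(1) Suc.prems] by (simp add: mult_ac)
  finally show ?case .
qed

lemma rw_dist_le_eig_sum: assumes "n > 0"
  shows "rw_dist n r a t \<le> (\<Sum>k\<in>{1..<n}. \<bar>rw_eig n r a k\<bar> ^ t)"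
proof -
  have pointwise: "\<bar>mat_pow n (rw_matrix n r a) t y 0 - 1 / real n\<bar>
      \<le> (\<Sum>k\<in>{1..<n}. \<bar>rw_eig n r a k\<bar> ^ t) / real n" if y: "y < n" for y
  proof -
    have split: "{..<n} = insert 0 {1..<n}" using assms by auto
    have "complex_of_real (mat_pow n (rw_matrix n r a) t y 0 - 1 / real n)
        = (\<Sum>k\<in>{1..<n}. complex_of_real (rw_eig n r a k) ^ t * chi n k (int y)) / of_nat n"
      using mat_pow_fourier[OF assms y, of r a t] assms by (simp add: split add_divide_distrib)
    then have "\<bar>mat_pow n (rw_matrix n r a) t y 0 - 1 / real n\<bar>
        = cmod (\<Sum>k\<in>{1..<n}. complex_of_real (rw_eig n r a k) ^ t * chi n k (int y)) / real n"
      by (metis norm_divide norm_of_nat norm_of_real)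
    also have "\<dots> \<le> (\<Sum>k\<in>{1..<n}. cmod (complex_of_real (rw_eig n r a k) ^ t * chi n k (int y))) / real n"
      by (intro divide_right_mono norm_sum) simp
    also have "\<dots> = (\<Sum>k\<in>{1..<n}. \<bar>rw_eig n r a k\<bar> ^ t) / real n"
      by (simp add: norm_mult norm_power)
    finally show ?thesis .
  qed
  have "rw_dist n r a t \<le> (\<Sum>y<n. (\<Sum>k\<in>{1..<n}. \<bar>rw_eig n r a k\<bar> ^ t) / real n)"
    unfolding rw_dist_def by (intro sum_mono) (use pointwise in auto)
  also have "\<dots> = (\<Sum>k\<in>{1..<n}. \<bar>rw_eig n r a k\<bar> ^ t)" using assms by simp
  finally show ?thesis .
qed

definition fourier_coeff :: "nat \<Rightarrow> (nat \<Rightarrow> complex) \<Rightarrow> nat \<Rightarrow> complex" where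
  "fourier_coeff n v k = (\<Sum>y<n. chi n k (int y) * v y)"

lemma fourier_inversion: assumes "n > 0" "x0 < n"
  shows "(\<Sum>k<n. chi n k (- int x0) * fourier_coeff n v k) = of_nat n * v x0"
proof -
  have "(\<Sum>k<n. chi n k (- int x0) * fourier_coeff n v k) = (\<Sum>k<n. \<Sum>y<n. v y * chi n k (int y - int x0))"
    unfolding fourier_coeff_def sum_distrib_left
    by (intro sum.cong refl) (simp add: chi_add[symmetric] mult_ac)
  also have "\<dots> = (\<Sum>y<n. v y * (\<Sum>k<n. chi n k (int y - int x0)))"
    by (subst sum.swap) (simp only: sum_distrib_left)
  also have "\<dots> = (\<Sum>y<n. if y = x0 then v y * of_nat n else 0)"
    by (rule sum.cong) (simp_all add: chi_sum_freq_diff[OF assms(1) _ assms(2)])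
  also have "\<dots> = of_nat n * v x0" using assms(2) by simp
  finally show ?thesis .
qed

text \<open>Since characters are left eigenvectors, the Fourier coefficients of an eigenvector with
  eigenvalue mu vanish except at frequencies k with rw_eig n r a k = mu.\<close>
lemma fourier_coeff_eigenvector:
  assumes "n > 0"
    and ev: "\<And>y. y < n \<Longrightarrow> (\<Sum>x<n. complex_of_real (rw_matrix n r a y x) * v x) = \<mu> * v y"
  shows "(\<mu> - complex_of_real (rw_eig n r a k)) * fourier_coeff n v k = 0"
proof -
  have "\<mu> * fourier_coeff n v k = (\<Sum>y<n. chi n k (int y) * (\<mu> * v y))"
    unfolding fourier_coeff_def sum_distrib_left by (simp add: mult_ac)
  also have "\<dots> = (\<Sum>y<n. chi n k (int y) * (\<Sum>x<n. complex_of_real (rw_matrix n r a y x) * v x))"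
    by (intro sum.cong refl) (simp add: ev)
  also have "\<dots> = (\<Sum>y<n. \<Sum>x<n. v x * (complex_of_real (rw_matrix n r a y x) * chi n k (int y)))"
    by (simp only: sum_distrib_left mult_ac)
  also have "\<dots> = (\<Sum>x<n. v x * (\<Sum>y<n. complex_of_real (rw_matrix n r a y x) * chi n k (int y)))"
    by (subst sum.swap) (simp only: sum_distrib_left)
  also have "\<dots> = complex_of_real (rw_eig n r a k) * fourier_coeff n v k"
    unfolding fourier_coeff_def rw_matrix_chi_left[OF assms(1)] by (simp add: sum_distrib_left mult_ac)
  finally show ?thesis by (simp add: algebra_simps)
qed

text \<open>The eigenvalues of the walk are exactly the numbers rw_eig n r a k, k < n.  If mu were
  none of them, all Fourier coefficients of an eigenvector would vanish, hence the eigenvector.\<close>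
lemma rw_is_eigenvalue_iff: assumes "n > 0"
  shows "is_eigenvalue n (rw_matrix n r a) \<mu> \<longleftrightarrow> (\<exists>k<n. \<mu> = complex_of_real (rw_eig n r a k))"
proof
  assume "\<exists>k<n. \<mu> = complex_of_real (rw_eig n r a k)"
  then obtain k where k: "k < n" "\<mu> = complex_of_real (rw_eig n r a k)" by blast
  show "is_eigenvalue n (rw_matrix n r a) \<mu>"
    unfolding is_eigenvalue_def k(2)
    using rw_matrix_chi_right[OF assms] assms
    by (intro exI[of _ "\<lambda>x. chi n k (int x)"] conjI exI[of _ 0]) auto
next
  assume "is_eigenvalue n (rw_matrix n r a) \<mu>"
  then obtain v x0 where x0: "x0 < n" "v x0 \<noteq> 0"
    and ev: "\<And>y. y < n \<Longrightarrow> (\<Sum>x<n. complex_of_real (rw_matrix n r a y x) * v x) = \<mu> * v y"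
    unfolding is_eigenvalue_def by blast
  show "\<exists>k<n. \<mu> = complex_of_real (rw_eig n r a k)"
  proof (rule ccontr)
    assume "\<not> ?thesis"
    then have "fourier_coeff n v k = 0" if "k < n" for k
      using fourier_coeff_eigenvector[OF assms ev, of k] that by auto
    then have "of_nat n * v x0 = 0" using fourier_inversion[OF assms x0(1), of v] by simp
    with x0 assms show False by simp
  qed
qed

section \<open>Irreducibility\<close>

lemma rw_matrix_nonneg: "rw_matrix n r a y x \<ge> 0"
  unfolding rw_matrix_def by (intro divide_nonneg_nonneg add_nonneg_nonneg sum_nonneg) auto

text \<open>If k a_i is divisible by n for all generators, then every state y reachable from 0 has
  k y divisible by n: the walk stays in the kernel of the character of frequency k.\<close>
lemma reachable_in_kernel: assumes "n > 0" "\<forall>i<r. int n dvd k * a i"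
  shows "y < n \<Longrightarrow> mat_pow n (rw_matrix n r a) t y 0 > 0 \<Longrightarrow> int n dvd k * int y"
proof (induction t arbitrary: y)
  case 0
  then show ?case by simp
next
  case (Suc t)
  have "\<exists>z<n. rw_matrix n r a y z * mat_pow n (rw_matrix n r a) t z 0 > 0"
  proof (rule ccontr)
    assume "\<not> ?thesis"
    then have "(\<Sum>z<n. rw_matrix n r a y z * mat_pow n (rw_matrix n r a) t z 0) \<le> 0"
      by (intro sum_nonpos) (meson lessThan_iff not_less)
    with Suc.prems show False by simp
  qed
  then obtain z where z: "z < n" "rw_matrix n r a y z * mat_pow n (rw_matrix n r a) t z 0 > 0"
    by blast
  have step: "rw_matrix n r a y z > 0" and reach: "mat_pow n (rw_matrix n r a) t z 0 > 0"
    using z(2) rw_matrix_nonneg[of n r a y z] by (auto simp: zero_less_mult_iff)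
  have "\<exists>s. int n dvd k * s \<and> (int z + s) mod int n = int y"
  proof (rule ccontr)
    assume "\<not> ?thesis"
    then have no_step: "\<forall>s. int n dvd k * s \<longrightarrow> (int z + s) mod int n \<noteq> int y" by blast
    have "int z mod int n \<noteq> int y" using no_step[rule_format, of 0] by auto
    moreover have "(int z + a i) mod int n \<noteq> int y" if "i < r" for i
      using no_step assms(2) that by blast
    moreover have "(int z - a i) mod int n \<noteq> int y" if "i < r" for i
      using no_step[rule_format, of "- a i"] assms(2) that by auto
    ultimately have "rw_matrix n r a y z = 0" unfolding rw_matrix_def by simp
    with step show False by simp
  qed
  then obtain s where s: "int n dvd k * s" "(int z + s) mod int n = int y" by blast
  have "int n dvd k * (int z + s)"
    using Suc.IH[OF z(1) reach] s(1) by (simp add: distrib_left)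
  then show ?case using s(2) by (metis dvd_eq_mod_eq_0 mod_mult_right_eq)
qed

lemma irreducible_freq_dvd: assumes "n \<ge> 2" "rw_irreducible n r a" "\<forall>i<r. int n dvd k * a i"
  shows "int n dvd k"
proof -
  obtain t where "mat_pow n (rw_matrix n r a) t 1 0 > 0"
    using assms(1,2) unfolding rw_irreducible_def by force
  from reachable_in_kernel[OF _ assms(3) _ this] assms(1) show ?thesis by simp
qed

section \<open>Trigonometric estimates\<close>

lemma cos_ge_quadratic: "cos (x::real) \<ge> 1 - x^2 / 2"
proof -
  have nonneg_case: "cos y \<ge> 1 - y^2 / 2" if "y \<ge> 0" for y :: real
  proof -
    let ?f = "\<lambda>x. cos x - 1 + x^2 / 2"
    have "?f 0 \<le> ?f y"
    proof (rule DERIV_nonneg_imp_nondecreasing[OF that])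
      fix u :: real assume "0 \<le> u" "u \<le> y"
      then show "\<exists>d. DERIV ?f u :> d \<and> d \<ge> 0"
        by (intro exI[of _ "u - sin u"] conjI) (auto intro!: derivative_eq_intros simp: sin_x_le_x)
    qed
    then show ?thesis by simp
  qed
  show ?thesis using nonneg_case[of x] nonneg_case[of "-x"] by (cases "x \<ge> 0") auto
qed

lemma sin_ge_cubic: fixes x :: real assumes "x \<ge> 0" shows "sin x \<ge> x - x^3 / 6"
proof -
  let ?f = "\<lambda>x. sin x - x + x^3 / 6"
  have "?f 0 \<le> ?f x"
  proof (rule DERIV_nonneg_imp_nondecreasing[OF assms])
    fix u :: real assume "0 \<le> u" "u \<le> x"
    then show "\<exists>d. DERIV ?f u :> d \<and> d \<ge> 0"
      using cos_ge_quadratic[of u]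
      by (intro exI[of _ "cos u - 1 + u^2 / 2"] conjI)
         (auto intro!: derivative_eq_intros simp: field_simps power2_eq_square)
  qed
  then show ?thesis by simp
qed

lemma one_minus_cos_le: "1 - cos (2 * pi * (u::real)) \<le> 2 * pi^2 * u^2"
  using cos_ge_quadratic[of "2 * pi * u"] by (simp add: power_mult_distrib)

lemma one_minus_cos_ge: fixes u :: real assumes "\<bar>u\<bar> \<le> 1/2" shows "1 - cos (2 * pi * u) \<ge> u^2 / 2"
proof -
  define w where "w = pi * \<bar>u\<bar>"
  have w0: "w \<ge> 0" unfolding w_def by simp
  have "pi * \<bar>u\<bar> \<le> 4 * (1/2)" by (rule mult_mono) (use assms pi_less_4 in auto)
  then have w2: "w \<le> 2" unfolding w_def by simp
  have "w^3 \<le> 4 * w"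
    using w0 w2 mult_mono[of w 2 w 2] by (simp add: power3_eq_cube power2_eq_square mult_right_mono)
  then have sin_w: "sin w \<ge> w / 3" using sin_ge_cubic[OF w0] by simp
  have "w \<ge> 2 * \<bar>u\<bar>" unfolding w_def using pi_ge_two by (simp add: mult_right_mono)
  then have "4 * u^2 \<le> w^2"
    using power_mono[of "2 * \<bar>u\<bar>" w 2] by (simp add: power_mult_distrib)
  moreover have "(w / 3)^2 = w^2 / 9" by (simp add: power_divide)
  ultimately have "u^2 / 4 \<le> (w / 3)^2" using zero_le_power2[of u] by linarith
  also have "\<dots> \<le> sin w ^ 2" using sin_w w0 by (intro power_mono) auto
  also have "sin w ^ 2 = sin (pi * u) ^ 2" unfolding w_def by (cases "u \<ge> 0") auto
  also have "sin (pi * u) ^ 2 = (1 - cos (2 * pi * u)) / 2"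
    using cos_double_sin[of "pi * u"] by (simp add: mult_ac)
  finally show ?thesis by simp
qed

definition round_err :: "real \<Rightarrow> real" where
  "round_err \<theta> = \<theta> - of_int (round \<theta>)"

definition int_dist :: "real \<Rightarrow> real" where
  "int_dist \<theta> = \<bar>round_err \<theta>\<bar>"

lemma int_dist_nonneg: "int_dist \<theta> \<ge> 0"
  unfolding int_dist_def by simp

lemma int_dist_le_half: "int_dist \<theta> \<le> 1/2"
  unfolding int_dist_def round_err_def using of_int_round_abs_le[of \<theta>] by linarith

lemma int_dist_minimal: "int_dist \<theta> \<le> \<bar>\<theta> - of_int m\<bar>"
  unfolding int_dist_def round_err_def by (rule round_diff_minimal)

lemma cos_shift_int: "cos (2 * pi * (\<theta> - of_int m)) = cos (2 * pi * \<theta>)"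
proof -
  have "2 * pi * (\<theta> - of_int m) = 2 * pi * \<theta> - (2 * pi) * of_int m" by (simp add: algebra_simps)
  then show ?thesis by (simp only: cos_diff cos_int_2pin sin_int_2pin)
qed

lemma one_minus_cos_le_int_dist: "1 - cos (2 * pi * \<theta>) \<le> 2 * pi^2 * int_dist \<theta> ^ 2"
  using one_minus_cos_le[of "round_err \<theta>"] unfolding round_err_def cos_shift_int int_dist_def
  by simp

lemma one_minus_cos_ge_int_dist: "1 - cos (2 * pi * \<theta>) \<ge> int_dist \<theta> ^ 2 / 2"
  using one_minus_cos_ge[of "round_err \<theta>"] int_dist_le_half[of \<theta>]
  unfolding int_dist_def round_err_def cos_shift_int by simp

section \<open>The spread of a frequency and the size of its eigenvalue\<close>

definition rw_angle :: "nat \<Rightarrow> (nat \<Rightarrow> int) \<Rightarrow> nat \<Rightarrow> nat \<Rightarrow> real" where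
  "rw_angle n a k i = real k * of_int (a i) / real n"

definition rw_spread :: "nat \<Rightarrow> nat \<Rightarrow> (nat \<Rightarrow> int) \<Rightarrow> nat \<Rightarrow> real" where
  "rw_spread n r a k = Max ((\<lambda>i. int_dist (rw_angle n a k i)) ` {..<r})"

lemma rw_spread_ge: "i < r \<Longrightarrow> int_dist (rw_angle n a k i) \<le> rw_spread n r a k"
  unfolding rw_spread_def by (rule Max_ge) auto

lemma rw_spread_attained: assumes "r \<ge> 1"
  obtains i where "i < r" "rw_spread n r a k = int_dist (rw_angle n a k i)"
proof -
  have "rw_spread n r a k \<in> (\<lambda>i. int_dist (rw_angle n a k i)) ` {..<r}"
    unfolding rw_spread_def using assms by (intro Max_in) (auto simp: lessThan_empty_iff)
  then show ?thesis using that by auto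
qed

lemma rw_spread_bounds: assumes "r \<ge> 1"
  shows rw_spread_nonneg: "rw_spread n r a k \<ge> 0" and rw_spread_le_half: "rw_spread n r a k \<le> 1/2"
proof -
  obtain i where "rw_spread n r a k = int_dist (rw_angle n a k i)"
    using rw_spread_attained[OF assms] by blast
  then show "rw_spread n r a k \<ge> 0" "rw_spread n r a k \<le> 1/2"
    using int_dist_nonneg int_dist_le_half by simp_all
qed

lemma one_minus_rw_eig:
  "1 - rw_eig n r a k = 2 * (\<Sum>i<r. 1 - cos (2 * pi * rw_angle n a k i)) / real (2 * r + 1)"
proof -
  have "(\<Sum>i<r. 1 - cos (2 * pi * rw_angle n a k i))
      = real r - (\<Sum>i<r. cos (2 * pi * real k * of_int (a i) / real n))"
    by (simp add: sum_subtractf rw_angle_def mult.assoc)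
  then show ?thesis unfolding rw_eig_def by (simp add: field_simps sum_distrib_left[symmetric])
qed

lemma rw_eig_abs_gap: assumes "r \<ge> 1"
  shows "rw_spread n r a k ^ 2 / real (2 * r + 1) \<le> 1 - \<bar>rw_eig n r a k\<bar>"
proof -
  define S where "S = (\<Sum>i<r. 1 - cos (2 * pi * rw_angle n a k i))"
  obtain i where i: "i < r" "rw_spread n r a k = int_dist (rw_angle n a k i)"
    using rw_spread_attained[OF assms] by blast
  have "1 - cos (2 * pi * rw_angle n a k i) \<le> S"
    unfolding S_def by (rule member_le_sum) (use i in auto)
  then have S_lower: "rw_spread n r a k ^ 2 / 2 \<le> S"
    using one_minus_cos_ge_int_dist[of "rw_angle n a k i"] i by simp
  have S_upper: "S \<le> 2 * real r"
    unfolding S_def using sum_mono[of "{..<r}" "\<lambda>i. 1 - cos (2 * pi * rw_angle n a k i)" "\<lambda>_. 2"]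
    by (simp add: cos_ge_minus_one)
  have eq: "1 - rw_eig n r a k = 2 * S / real (2 * r + 1)"
    unfolding S_def by (rule one_minus_rw_eig)
  have quarter: "rw_spread n r a k ^ 2 \<le> 1/4"
    using rw_spread_le_half[OF assms] rw_spread_nonneg[OF assms]
      power_mono[of "rw_spread n r a k" "1/2" 2] by (simp add: power_divide)
  show ?thesis
  proof (cases "rw_eig n r a k \<ge> 0")
    case True
    then show ?thesis using eq S_lower by (simp add: divide_right_mono)
  next
    case False
    then have "1 - \<bar>rw_eig n r a k\<bar> = 2 - 2 * S / real (2 * r + 1)" using eq by simp
    also have "\<dots> = (2 * real (2 * r + 1) - 2 * S) / real (2 * r + 1)" by (simp add: field_simps)
    also have "\<dots> \<ge> rw_spread n r a k ^ 2 / real (2 * r + 1)"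
      by (intro divide_right_mono) (use S_upper quarter in auto)
    finally show ?thesis .
  qed
qed

lemma rw_eig_gap_upper: "1 - rw_eig n r a k \<le> 2 * pi^2 * rw_spread n r a k ^ 2"
proof -
  have "(\<Sum>i<r. 1 - cos (2 * pi * rw_angle n a k i)) \<le> (\<Sum>i<r. 2 * pi^2 * rw_spread n r a k ^ 2)"
  proof (rule sum_mono)
    fix i assume "i \<in> {..<r}"
    then have "int_dist (rw_angle n a k i) ^ 2 \<le> rw_spread n r a k ^ 2"
      using rw_spread_ge int_dist_nonneg by (intro power_mono) auto
    then show "1 - cos (2 * pi * rw_angle n a k i) \<le> 2 * pi^2 * rw_spread n r a k ^ 2"
      using one_minus_cos_le_int_dist[of "rw_angle n a k i"]
      by (smt (verit) mult_left_mono pi_gt_zero zero_le_power2)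
  qed
  then have "1 - rw_eig n r a k \<le> 2 * (real r * (2 * pi^2 * rw_spread n r a k ^ 2)) / real (2 * r + 1)"
    unfolding one_minus_rw_eig by (intro divide_right_mono) auto
  also have "\<dots> \<le> 2 * pi^2 * rw_spread n r a k ^ 2"
    using mult_right_mono[of "2 * real r" "real (2 * r + 1)" "2 * pi^2 * rw_spread n r a k ^ 2"]
    by (simp add: field_simps)
  finally show ?thesis .
qed

lemma rw_spread_pos: assumes "r \<ge> 1" "n \<ge> 2" "rw_irreducible n r a" "1 \<le> k" "k < n"
  shows "rw_spread n r a k > 0"
proof (rule ccontr)
  assume "\<not> ?thesis"
  then have zero: "rw_spread n r a k \<le> 0" by simp
  have "int n dvd int k * a i" if i: "i < r" for i
  proof -
    have "int_dist (rw_angle n a k i) = 0"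
      using rw_spread_ge[OF i, of n a k] int_dist_nonneg[of "rw_angle n a k i"] zero by simp
    then have "rw_angle n a k i = of_int (round (rw_angle n a k i))"
      unfolding int_dist_def round_err_def by simp
    then have "real k * of_int (a i) = real n * of_int (round (rw_angle n a k i))"
      unfolding rw_angle_def using assms(2) by (simp add: field_simps)
    then have "int k * a i = int n * round (rw_angle n a k i)"
      by (metis of_int_eq_iff of_int_mult of_int_of_nat_eq)
    then show ?thesis by simp
  qed
  then have "n dvd k" using irreducible_freq_dvd[OF assms(2,3)] by (metis of_nat_dvd_iff)
  with assms(4,5) show False by (simp add: nat_dvd_not_less)
qed

definition rw_min_spread :: "nat \<Rightarrow> nat \<Rightarrow> (nat \<Rightarrow> int) \<Rightarrow> real" where
  "rw_min_spread n r a = Min (rw_spread n r a ` {1..<n})"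

lemma rw_min_spread_le: "1 \<le> k \<Longrightarrow> k < n \<Longrightarrow> rw_min_spread n r a \<le> rw_spread n r a k"
  unfolding rw_min_spread_def by (rule Min_le) auto

lemma rw_min_spread_attained: assumes "n \<ge> 2"
  obtains k where "1 \<le> k" "k < n" "rw_spread n r a k = rw_min_spread n r a"
proof -
  have "rw_min_spread n r a \<in> rw_spread n r a ` {1..<n}"
    unfolding rw_min_spread_def using assms by (intro Min_in) auto
  then show ?thesis using that by auto
qed

lemma rw_min_spread_pos: assumes "r \<ge> 1" "n \<ge> 2" "rw_irreducible n r a"
  shows "rw_min_spread n r a > 0"
proof -
  obtain k where "1 \<le> k" "k < n" "rw_spread n r a k = rw_min_spread n r a"
    using rw_min_spread_attained[OF assms(2)] by blast
  then show ?thesis using rw_spread_pos[OF assms, of k] by simp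
qed

section \<open>The spectral gap\<close>

lemma rw_spectral_gap_le: assumes "r \<ge> 1" "n \<ge> 2" "rw_irreducible n r a"
  shows "1 - rw_lambda_m n r a \<le> 2 * pi^2 * rw_min_spread n r a ^ 2"
proof -
  obtain k0 where k0: "1 \<le> k0" "k0 < n" "rw_spread n r a k0 = rw_min_spread n r a"
    using rw_min_spread_attained[OF assms(2)] by blast
  define S where "S = {cmod \<mu> | \<mu>. is_eigenvalue n (rw_matrix n r a) \<mu> \<and> \<mu> \<noteq> 1}"
  have "S \<subseteq> (\<lambda>k. \<bar>rw_eig n r a k\<bar>) ` {..<n}"
    unfolding S_def using rw_is_eigenvalue_iff[of n r a] assms(2) by auto
  then have finite_S: "finite S" by (rule finite_subset) simp
  have "rw_spread n r a k0 ^ 2 / real (2 * r + 1) > 0"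
    using rw_spread_pos[OF assms k0(1,2)] by simp
  then have "rw_eig n r a k0 < 1"
    using rw_eig_abs_gap[OF assms(1), of n a k0] by linarith
  then have nontrivial: "complex_of_real (rw_eig n r a k0) \<noteq> 1" by simp
  have "is_eigenvalue n (rw_matrix n r a) (complex_of_real (rw_eig n r a k0))"
    using rw_is_eigenvalue_iff[of n r a] assms(2) k0(2) by auto
  then have "\<bar>rw_eig n r a k0\<bar> \<in> S"
    unfolding S_def using nontrivial by (intro CollectI exI[of _ "complex_of_real (rw_eig n r a k0)"]) simp
  then have "\<bar>rw_eig n r a k0\<bar> \<le> Max S" by (rule Max_ge[OF finite_S])
  then have "rw_eig n r a k0 \<le> rw_lambda_m n r a"
    unfolding rw_lambda_m_def S_def[symmetric] by linarith
  then show ?thesis using rw_eig_gap_upper[of n r a k0] k0(3) by simp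
qed

section \<open>Counting frequencies of small spread\<close>

lemma rw_angle_difference:
  assumes "n > 0" "k < n" "k' < n" "k \<noteq> k'"
  obtains d where "1 \<le> d" "d < n"
    "\<And>i. int_dist (rw_angle n a d i) \<le> \<bar>round_err (rw_angle n a k i) - round_err (rw_angle n a k' i)\<bar>"
proof -
  define q where "q = (int k - int k') div int n"
  define d where "d = nat ((int k - int k') mod int n)"
  have d_eq: "int d = int k - int k' - int n * q"
    using div_mult_mod_eq[of "int k - int k'" "int n"] assms(1)
    unfolding d_def q_def by (simp add: algebra_simps)
  have d_mod: "int d = (int k - int k') mod int n" unfolding d_def using assms(1) by simp
  have "d < n" unfolding d_def using assms(1) by (simp add: nat_less_iff)
  moreover have "d \<ge> 1"
  proof (rule ccontr)
    assume "\<not> d \<ge> 1"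
    then have "(int k - int k') mod int n = 0" using d_mod by simp
    then have "int k mod int n = int k' mod int n" by (simp add: mod_eq_dvd_iff dvd_eq_mod_eq_0)
    then show False using assms by simp
  qed
  moreover have "int_dist (rw_angle n a d i) \<le> \<bar>round_err (rw_angle n a k i) - round_err (rw_angle n a k' i)\<bar>" for i
  proof -
    have real_d: "real d = real k - real k' - real n * of_int q"
      using d_eq by (metis of_int_of_nat_eq of_int_diff of_int_mult)
    have angle_d: "rw_angle n a d i = rw_angle n a k i - rw_angle n a k' i - of_int (q * a i)"
      unfolding rw_angle_def real_d using assms(1) by (simp add: field_simps)
    have "int_dist (rw_angle n a d i) \<le> \<bar>rw_angle n a d i
          - of_int (round (rw_angle n a k i) - round (rw_angle n a k' i) - q * a i)\<bar>"
      by (rule int_dist_minimal)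
    also have "\<dots> = \<bar>round_err (rw_angle n a k i) - round_err (rw_angle n a k' i)\<bar>"
      unfolding angle_d round_err_def by (simp add: algebra_simps)
    finally show ?thesis .
  qed
  ultimately show ?thesis using that by blast
qed

text \<open>The cell of frequency k in the grid of mesh rho on the torus: the vector of the indices
  floor(round_err(k a_i / n) / rho), i < r.\<close>
definition spread_cell :: "nat \<Rightarrow> nat \<Rightarrow> (nat \<Rightarrow> int) \<Rightarrow> real \<Rightarrow> nat \<Rightarrow> nat \<Rightarrow> int" where
  "spread_cell n r a \<rho> k = restrict (\<lambda>i. \<lfloor>round_err (rw_angle n a k i) / \<rho>\<rfloor>) {..<r}"

lemma spread_cell_central:
  assumes "\<rho> > 0" "rw_spread n r a k < (real j + 1) * \<rho>"
  shows "spread_cell n r a \<rho> k \<in> PiE {..<r} (\<lambda>_. {-(int j + 1)..int j})"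
proof -
  have "\<lfloor>round_err (rw_angle n a k i) / \<rho>\<rfloor> \<in> {-(int j + 1)..int j}" if i: "i < r" for i
  proof -
    let ?u = "round_err (rw_angle n a k i)"
    have "\<bar>?u\<bar> < (real j + 1) * \<rho>"
      using rw_spread_ge[OF i, of n a k] assms(2) unfolding int_dist_def by simp
    then have "\<bar>?u / \<rho>\<bar> < real j + 1" using assms(1) by (simp add: field_simps abs_divide)
    then have "- (real j + 1) \<le> ?u / \<rho>" "?u / \<rho> < real j + 1" by linarith+
    then have "-(int j + 1) \<le> \<lfloor>?u / \<rho>\<rfloor>" "\<lfloor>?u / \<rho>\<rfloor> \<le> int j"
      by (simp_all add: le_floor_iff floor_le_iff)
    then show ?thesis by simp
  qed
  then show ?thesis unfolding spread_cell_def by auto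
qed

text \<open>If every nonzero frequency has spread at least rho, distinct frequencies lie in distinct
  cells: two frequencies in one cell would give a nonzero difference of spread below rho.\<close>
lemma spread_cell_inj:
  assumes "r \<ge> 1" "n > 0" and rho: "\<rho> > 0"
    and rho_min: "\<And>d. 1 \<le> d \<Longrightarrow> d < n \<Longrightarrow> \<rho> \<le> rw_spread n r a d"
  shows "inj_on (spread_cell n r a \<rho>) {..<n}"
proof (rule inj_onI, rule ccontr)
  fix k k' assume "k \<in> {..<n}" "k' \<in> {..<n}" and same: "spread_cell n r a \<rho> k = spread_cell n r a \<rho> k'"
    and ne: "k \<noteq> k'"
  define u where "u k i = round_err (rw_angle n a k i)" for k i
  have close: "\<bar>u k i - u k' i\<bar> < \<rho>" if i: "i < r" for i
  proof -
    have "\<lfloor>u k i / \<rho>\<rfloor> = \<lfloor>u k' i / \<rho>\<rfloor>"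
      using fun_cong[OF same, of i] i unfolding spread_cell_def u_def by simp
    then have "\<bar>u k i / \<rho> - u k' i / \<rho>\<bar> < 1" by (rule floor_eq_imp_diff_1)
    then show ?thesis using rho by (simp add: field_simps abs_divide diff_divide_distrib[symmetric])
  qed
  obtain d where d: "1 \<le> d" "d < n"
    and d_close: "\<And>i. int_dist (rw_angle n a d i) \<le> \<bar>u k i - u k' i\<bar>"
    using rw_angle_difference[OF assms(2) _ _ ne] \<open>k \<in> {..<n}\<close> \<open>k' \<in> {..<n}\<close>
    unfolding u_def by blast
  obtain i where "i < r" "rw_spread n r a d = int_dist (rw_angle n a d i)"
    using rw_spread_attained[OF assms(1)] by blast
  then have "rw_spread n r a d < \<rho>" using d_close[of i] close[of i] by simp
  with rho_min[OF d] show False by simp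
qed

lemma spread_packing:
  assumes "r \<ge> 1" "n > 0" and rho: "\<rho> > 0"
    and rho_min: "\<And>d. 1 \<le> d \<Longrightarrow> d < n \<Longrightarrow> \<rho> \<le> rw_spread n r a d"
  shows "card {k. k < n \<and> rw_spread n r a k < (real j + 1) * \<rho>} \<le> (2 * j + 2) ^ r"
proof -
  define K where "K = {k. k < n \<and> rw_spread n r a k < (real j + 1) * \<rho>}"
  define P where "P = PiE {..<r} (\<lambda>_. {-(int j + 1)..int j})"
  have "inj_on (spread_cell n r a \<rho>) K"
    using spread_cell_inj[OF assms] by (rule inj_on_subset) (auto simp: K_def)
  then have "card K = card (spread_cell n r a \<rho> ` K)" by (simp add: card_image)
  also have "\<dots> \<le> card P"
  proof (rule card_mono)
    show "finite P" by (simp add: P_def finite_PiE)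
    show "spread_cell n r a \<rho> ` K \<subseteq> P" using spread_cell_central[OF rho] unfolding K_def P_def by blast
  qed
  also have "card P = (2 * j + 2) ^ r"
  proof -
    have "nat (2 + 2 * int j) = Suc (Suc (2 * j))" by simp
    then show ?thesis unfolding P_def by (simp add: card_PiE)
  qed
  finally show ?thesis unfolding K_def .
qed

section \<open>Decay of the distance to uniformity\<close>

lemma geometric_tail_le: fixes q :: real
  assumes "0 \<le> q" "q \<le> 1/2" "finite J" "0 \<notin> J"
  shows "(\<Sum>j\<in>J. q ^ j) \<le> 2 * q"
proof -
  define M where "M = Suc (Max (insert 0 J))"
  have J_sub: "J \<subseteq> {..<M} - {0}" using assms(3,4) unfolding M_def by (auto simp: le_imp_less_Suc)
  have "(\<Sum>j\<in>J. q ^ j) \<le> (\<Sum>j\<in>{..<M} - {0}. q ^ j)"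
    by (rule sum_mono2) (use J_sub assms(1) in auto)
  also have "\<dots> = (\<Sum>j<M. q ^ j) - 1" unfolding M_def by (subst sum_diff1) auto
  also have "\<dots> = (1 - q ^ M) / (1 - q) - 1" using assms(2) by (simp add: sum_gp_strict)
  also have "\<dots> \<le> 1 / (1 - q) - 1" using assms by (intro diff_right_mono divide_right_mono) auto
  also have "\<dots> = q / (1 - q)" using assms(2) by (simp add: field_simps)
  also have "\<dots> \<le> 2 * q" using assms mult_left_mono[of "q * 2" 1 q] by (simp add: field_simps)
  finally show ?thesis .
qed

lemma layered_series_small:
  assumes "r \<ge> 1" "x \<ge> 3 * real r + 3" "finite J" "0 \<notin> J"
  shows "(\<Sum>j\<in>J. (2 * real j + 2) ^ r * exp (- x * real j)) < 1/2"
proof -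
  define q where "q = exp (- (x - real r))"
  have q0: "0 \<le> q" unfolding q_def by simp
  have small: "4 ^ (r + 1) * q < 1"
  proof -
    have "(4::real) \<le> exp 2"
      using exp_ge_add_one_self[of 1] power_mono[of 2 "exp (1::real)" 2]
      by (simp add: exp_of_nat_mult[symmetric])
    then have "(4::real) ^ (r + 1) \<le> exp 2 ^ (r + 1)" by (intro power_mono) auto
    also have "\<dots> = exp (real (r + 1) * 2)" by (simp only: exp_of_nat_mult)
    also have "\<dots> = exp (2 * real r + 2)" by (simp add: algebra_simps)
    also have "\<dots> < exp (x - real r)" using assms(2) by simp
    finally have "(4::real) ^ (r + 1) < exp (x - real r)" .
    moreover have "4 ^ (r + 1) * q = 4 ^ (r + 1) / exp (x - real r)"
      unfolding q_def using exp_minus[of "x - real r"] by (simp add: divide_inverse)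
    ultimately show ?thesis by (simp add: divide_less_eq_1_pos)
  qed
  have "q \<le> 1/2"
    using mult_right_mono[OF self_le_power[of 4 "r + 1"] q0] small by simp
  have term_le: "(2 * real j + 2) ^ r * exp (- x * real j) \<le> 4 ^ r * q ^ j" if "j \<in> J" for j
  proof -
    have "2 * real j + 2 \<le> 4 * exp (real j)" using exp_ge_add_one_self[of "real j"] by linarith
    then have "(2 * real j + 2) ^ r \<le> 4 ^ r * exp (real r * real j)"
      using power_mono[of "2 * real j + 2" "4 * exp (real j)" r]
      by (simp add: power_mult_distrib exp_of_nat_mult)
    then have "(2 * real j + 2) ^ r * exp (- x * real j) \<le> 4 ^ r * exp (real r * real j) * exp (- x * real j)"
      by (intro mult_right_mono) auto
    also have "\<dots> = 4 ^ r * q ^ j" unfolding q_def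
      by (simp add: exp_of_nat_mult[symmetric] exp_add[symmetric] algebra_simps)
    finally show ?thesis .
  qed
  have "(\<Sum>j\<in>J. (2 * real j + 2) ^ r * exp (- x * real j)) \<le> 4 ^ r * (\<Sum>j\<in>J. q ^ j)"
    using term_le by (simp add: sum_distrib_left sum_mono)
  also have "\<dots> \<le> 4 ^ r * (2 * q)"
    using geometric_tail_le[OF q0 \<open>q \<le> 1/2\<close> assms(3,4)] by simp
  also have "\<dots> < 1/2" using small by simp
  finally show ?thesis .
qed

lemma rw_eig_power_decay:
  assumes "r \<ge> 1" "\<rho> > 0" "j \<ge> 1" "real j * \<rho> \<le> rw_spread n r a k"
  shows "\<bar>rw_eig n r a k\<bar> ^ t \<le> exp (- (real t * \<rho>^2 / real (2 * r + 1)) * real j)"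
proof -
  have "real j * \<rho>^2 \<le> (real j * \<rho>)^2"
    using assms(2,3) by (simp add: power2_eq_square mult_right_mono)
  also have "\<dots> \<le> rw_spread n r a k ^ 2" using assms(2,4) by (intro power_mono) auto
  finally have "real j * \<rho>^2 / real (2 * r + 1) \<le> 1 - \<bar>rw_eig n r a k\<bar>"
    using rw_eig_abs_gap[OF assms(1), of n a k] by (smt (verit) divide_right_mono of_nat_0_le_iff)
  then have rate: "real t * (real j * \<rho>^2 / real (2 * r + 1)) \<le> real t * (1 - \<bar>rw_eig n r a k\<bar>)"
    by (intro mult_left_mono) auto
  have "\<bar>rw_eig n r a k\<bar> \<le> exp (- (1 - \<bar>rw_eig n r a k\<bar>))"
    using exp_ge_add_one_self[of "- (1 - \<bar>rw_eig n r a k\<bar>)"] by simp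
  then have "\<bar>rw_eig n r a k\<bar> ^ t \<le> exp (- (1 - \<bar>rw_eig n r a k\<bar>)) ^ t" by (intro power_mono) auto
  also have "\<dots> = exp (- (real t * (1 - \<bar>rw_eig n r a k\<bar>)))"
    by (simp add: exp_of_nat_mult[symmetric] algebra_simps)
  also have "\<dots> \<le> exp (- (real t * \<rho>^2 / real (2 * r + 1)) * real j)"
    using rate by (simp add: field_simps)
  finally show ?thesis .
qed

lemma floor_layer:
  assumes "\<rho> > 0" "s \<ge> 0"
  shows "real (nat \<lfloor>s / \<rho>\<rfloor>) * \<rho> \<le> s" "s < (real (nat \<lfloor>s / \<rho>\<rfloor>) + 1) * \<rho>"
proof -
  have eq: "real (nat \<lfloor>s / \<rho>\<rfloor>) = of_int \<lfloor>s / \<rho>\<rfloor>" using assms by simp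
  show "real (nat \<lfloor>s / \<rho>\<rfloor>) * \<rho> \<le> s"
    unfolding eq using assms by (simp add: pos_le_divide_eq[symmetric])
  have "s / \<rho> < of_int \<lfloor>s / \<rho>\<rfloor> + 1" by linarith
  then show "s < (real (nat \<lfloor>s / \<rho>\<rfloor>) + 1) * \<rho>" unfolding eq using assms by (simp add: field_simps)
qed

lemma sum_by_fibres_le:
  fixes g B :: "nat \<Rightarrow> real"
  assumes "finite K" "\<And>j. g j \<ge> 0" "\<And>j. real (card {k\<in>K. f k = j}) \<le> B j"
  shows "(\<Sum>k\<in>K. g (f k)) \<le> (\<Sum>j\<in>f ` K. B j * g j)"
proof -
  have "(\<Sum>k\<in>K. g (f k)) = (\<Sum>j\<in>f ` K. \<Sum>k\<in>{k\<in>K. f k = j}. g (f k))"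
    by (rule sum.image_gen) (rule assms(1))
  also have "\<dots> = (\<Sum>j\<in>f ` K. real (card {k\<in>K. f k = j}) * g j)"
    by (intro sum.cong refl) simp
  also have "\<dots> \<le> (\<Sum>j\<in>f ` K. B j * g j)"
    by (intro sum_mono mult_right_mono assms(2,3))
  finally show ?thesis .
qed

text \<open>Grouping the nonzero frequencies into layers j <= spread/rho < j+1 (each of size at most
  (2j+2)^r by packing) reduces the eigenvalue sum to the layered series.\<close>
lemma rw_dist_small:
  assumes r1: "r \<ge> 1" and "n > 0" and rho: "\<rho> > 0"
    and rho_min: "\<And>d. 1 \<le> d \<Longrightarrow> d < n \<Longrightarrow> \<rho> \<le> rw_spread n r a d"
    and large: "real t * \<rho>^2 / real (2 * r + 1) \<ge> 3 * real r + 3"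
  shows "rw_dist n r a t < 1/2"
proof -
  define x where "x = real t * \<rho>^2 / real (2 * r + 1)"
  define K where "K = {1..<n}"
  define layer where "layer k = nat \<lfloor>rw_spread n r a k / \<rho>\<rfloor>" for k
  have layer_bounds: "real (layer k) * \<rho> \<le> rw_spread n r a k"
    "rw_spread n r a k < (real (layer k) + 1) * \<rho>" for k
    unfolding layer_def using floor_layer[OF rho rw_spread_nonneg[OF r1, of n a k]] by simp_all
  have layer_pos: "layer k \<ge> 1" if "k \<in> K" for k
  proof -
    have "1 \<le> rw_spread n r a k / \<rho>" using rho_min[of k] that rho unfolding K_def by simp
    then show ?thesis unfolding layer_def by (simp add: le_floor_iff le_nat_iff)
  qed
  have layer_card: "real (card {k\<in>K. layer k = j}) \<le> (2 * real j + 2) ^ r" for j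
  proof -
    have "{k\<in>K. layer k = j} \<subseteq> {k. k < n \<and> rw_spread n r a k < (real j + 1) * \<rho>}"
      using layer_bounds(2) unfolding K_def by auto
    then have "card {k\<in>K. layer k = j} \<le> card {k. k < n \<and> rw_spread n r a k < (real j + 1) * \<rho>}"
      by (rule card_mono[rotated]) simp
    also have "\<dots> \<le> (2 * j + 2) ^ r" using spread_packing[OF r1 _ rho rho_min] assms(2) by simp
    finally have "real (card {k\<in>K. layer k = j}) \<le> real ((2 * j + 2) ^ r)" by (rule of_nat_mono)
    then show ?thesis by (simp add: add.commute)
  qed
  have "rw_dist n r a t \<le> (\<Sum>k\<in>K. \<bar>rw_eig n r a k\<bar> ^ t)"
    unfolding K_def using rw_dist_le_eig_sum assms(2) by simp
  also have "\<dots> \<le> (\<Sum>k\<in>K. exp (- x * real (layer k)))"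
  proof (rule sum_mono)
    fix k assume "k \<in> K"
    show "\<bar>rw_eig n r a k\<bar> ^ t \<le> exp (- x * real (layer k))"
      unfolding x_def by (rule rw_eig_power_decay[OF r1 rho layer_pos[OF \<open>k \<in> K\<close>] layer_bounds(1)])
  qed
  also have "\<dots> \<le> (\<Sum>j\<in>layer ` K. (2 * real j + 2) ^ r * exp (- x * real j))"
    by (rule sum_by_fibres_le) (simp_all add: layer_card, simp add: K_def)
  also have "\<dots> < 1/2"
  proof (rule layered_series_small[OF r1 large[folded x_def]])
    show "finite (layer ` K)" by (simp add: K_def)
    show "0 \<notin> layer ` K" using layer_pos by force
  qed
  finally show ?thesis .
qed

section \<open>The mixing time\<close>

text \<open>At time 0 the walk is far from uniform, so t_A(1/2) is the maximum of a nonempty set.\<close>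
lemma rw_dist_initial: assumes "n \<ge> 2" shows "rw_dist n r a 0 \<ge> 1/2"
proof -
  have "\<bar>mat_pow n (rw_matrix n r a) 0 0 0 - 1 / real n\<bar> \<le> rw_dist n r a 0"
    unfolding rw_dist_def by (rule member_le_sum) (use assms in auto)
  moreover have "\<bar>mat_pow n (rw_matrix n r a) 0 0 0 - 1 / real n\<bar> = 1 - 1 / real n"
    using assms by simp
  moreover have "1 / real n \<le> 1/2" using assms by (simp add: field_simps)
  ultimately show ?thesis by linarith
qed

lemma rw_mixing_le: assumes r1: "r \<ge> 1" and n2: "n \<ge> 2" and irr: "rw_irreducible n r a"
  shows "real (rw_mixing n r a (1/2)) * rw_min_spread n r a ^ 2 < (3 * real r + 3) * real (2 * r + 1)"
proof -
  define \<rho> where "\<rho> = rw_min_spread n r a"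
  define B where "B = (3 * real r + 3) * real (2 * r + 1)"
  define T where "T = {t. rw_dist n r a t \<ge> 1/2}"
  have rho: "\<rho> > 0" unfolding \<rho>_def using rw_min_spread_pos[OF assms] .
  have rho_min: "\<And>d. 1 \<le> d \<Longrightarrow> d < n \<Longrightarrow> \<rho> \<le> rw_spread n r a d"
    unfolding \<rho>_def by (rule rw_min_spread_le)
  have T_bound: "real t * \<rho>^2 < B" if "t \<in> T" for t
  proof (rule ccontr)
    assume "\<not> ?thesis"
    then have "real t * \<rho>^2 / real (2 * r + 1) \<ge> 3 * real r + 3" unfolding B_def by (simp add: field_simps)
    from rw_dist_small[OF r1 _ rho rho_min this] n2 that
    show False unfolding T_def by simp
  qed
  have "T \<subseteq> {..nat \<lceil>B / \<rho>^2\<rceil>}"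
  proof
    fix t assume "t \<in> T"
    then have "real t * \<rho>^2 < B" by (rule T_bound)
    then have "real t \<le> B / \<rho>^2" using rho by (simp add: field_simps)
    also have "\<dots> \<le> of_int \<lceil>B / \<rho>^2\<rceil>" by simp
    finally have "int t \<le> \<lceil>B / \<rho>^2\<rceil>" by linarith
    then show "t \<in> {..nat \<lceil>B / \<rho>^2\<rceil>}" by simp
  qed
  then have "finite T" by (rule finite_subset) simp
  moreover have "0 \<in> T" unfolding T_def using rw_dist_initial[OF n2] by simp
  ultimately have "rw_mixing n r a (1/2) \<in> T"
    unfolding rw_mixing_def T_def[symmetric] by (intro Max_in) auto
  then show ?thesis using T_bound unfolding \<rho>_def B_def by blast
qed

theorem mainTheorem5:
  shows "\<forall>r::nat. r \<ge> 1 \<longrightarrow> (\<exists>C::real. \<forall>(n::nat) (a::nat \<Rightarrow> int).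
           real n \<ge> pi ^ r \<longrightarrow> rw_irreducible n r a \<longrightarrow>
           (1 - rw_lambda_m n r a) * real (rw_mixing n r a (1/2)) \<le> C)"
proof (intro allI impI)
  fix r :: nat assume r1: "r \<ge> 1"
  show "\<exists>C::real. \<forall>(n::nat) (a::nat \<Rightarrow> int).
           real n \<ge> pi ^ r \<longrightarrow> rw_irreducible n r a \<longrightarrow>
           (1 - rw_lambda_m n r a) * real (rw_mixing n r a (1/2)) \<le> C"
  proof (intro exI[of _ "2 * pi^2 * ((3 * real r + 3) * real (2 * r + 1))"] allI impI)
    fix n :: nat and a :: "nat \<Rightarrow> int"
    assume n_large: "real n \<ge> pi ^ r" and irr: "rw_irreducible n r a"
    have "2 \<le> pi ^ r" using pi_ge_two power_increasing[OF r1, of pi] by simp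
    then have n2: "n \<ge> 2" using n_large by linarith
    let ?\<rho> = "rw_min_spread n r a" and ?t = "real (rw_mixing n r a (1/2))"
    have "(1 - rw_lambda_m n r a) * ?t \<le> 2 * pi^2 * ?\<rho>^2 * ?t"
      using rw_spectral_gap_le[OF r1 n2 irr] by (intro mult_right_mono) auto
    also have "\<dots> = 2 * pi^2 * (?t * ?\<rho>^2)" by simp
    also have "\<dots> \<le> 2 * pi^2 * ((3 * real r + 3) * real (2 * r + 1))"
      using rw_mixing_le[OF r1 n2 irr] by (intro mult_left_mono) auto
    finally show "(1 - rw_lambda_m n r a) * ?t \<le> 2 * pi^2 * ((3 * real r + 3) * real (2 * r + 1))" .
  qed
qed

end
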